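(* Let $d\in\mathbb N$ and $\gamma\in\mathbb R$, and consider the planar system $$\dot Y_1=Y_2-dY_1Y_2,\qquad \dot Y_2=-Y_1-Y_2^2-\gamma Y_2^2 .$$ Then $Y_2$ satisfies the Liénard equation $\ddot Y_2+(2(1-\gamma)+d)\,Y_2\dot Y_2+Y_2+d(1-\gamma)Y_2^3=0$, and the origin is an isochronous center if and only if $(2(1-\gamma)+d)^2=9d(1-\gamma)$, i.e. if and only if $\gamma=1-d$ or $\gamma=1-\frac d4$. In particular, for $\gamma=0$ (the system of characteristics of radially symmetric non-relativistic cold plasma oscillations in $\mathbb R^d$, $\dot x=xY_2$, $\dot Y_1=Y_2-dY_1Y_2$, $\dot Y_2=-Y_1-Y_2^2$), the oscillations are isochronous if and only if $d=1$ or $d=4$. Correspondingly, adding the force term $\mathbf F(\mathbf V,r)=\gamma\,|\mathbf V|^2/r$ with $\gamma\in\{1-d,\,1-\frac d4\}$ to the right-hand side of the momentum equation of the radially symmetric Euler–Poisson system makes the radial oscillations isochronous in dimension $d$.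
   Context: The radially symmetric repulsive Euler–Poisson system with constant background $c=1$, $\mathbf v_t+(\mathbf v\cdot\nabla)\mathbf v=-\nabla\Psi$, $\rho_t+\mathrm{div}(\rho\mathbf v)=0$, $\Delta\Psi=1-\rho$, with $\mathbf v=F(t,r)\mathbf r$, $\nabla\Psi=G(t,r)\mathbf r$, $r=|\mathbf r|$, reduces to $G_t+FrG_r=F-dFG$, $F_t+FrF_r=-F^2-G$; here $Y_1=G$, $Y_2=F$ along characteristics $\dot r=rF$. Adding a force $\mathbf F(\mathbf V,r)$ to the momentum equation adds $-L$ with $L=\frac1r\mathbf F$ to the equation for $\dot Y_2$ (sign conventions as in the system displayed in the claim). An isochronous center is a center of a planar ODE at which all nearby periodic orbits have the same period. *)

theory Defs
  imports "HOL-Analysis.Analysis"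
begin

definition ode_sol :: "(real \<times> real \<Rightarrow> real \<times> real) \<Rightarrow> (real \<Rightarrow> real \<times> real) \<Rightarrow> bool" where
  "ode_sol f \<phi> \<longleftrightarrow> (\<forall>t. (\<phi> has_vector_derivative f (\<phi> t)) (at t))"

definition ode_sol_on :: "(real \<times> real \<Rightarrow> real \<times> real) \<Rightarrow> real set \<Rightarrow> (real \<Rightarrow> real \<times> real) \<Rightarrow> bool" where
  "ode_sol_on f I \<phi> \<longleftrightarrow> (\<forall>t\<in>I. (\<phi> has_vector_derivative f (\<phi> t)) (at t))"

definition periodic_sol :: "(real \<times> real \<Rightarrow> real \<times> real) \<Rightarrow> (real \<Rightarrow> real \<times> real) \<Rightarrow> real \<Rightarrow> bool" where
  "periodic_sol f \<phi> T \<longleftrightarrow> ode_sol f \<phi> \<and> T > 0 \<and> (\<forall>t. \<phi> (t + T) = \<phi> t)"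

definition minimal_period_sol :: "(real \<times> real \<Rightarrow> real \<times> real) \<Rightarrow> (real \<Rightarrow> real \<times> real) \<Rightarrow> real \<Rightarrow> bool" where
  "minimal_period_sol f \<phi> T \<longleftrightarrow> periodic_sol f \<phi> T \<and>
     (\<forall>S. 0 < S \<and> S < T \<longrightarrow> \<not> (\<forall>t. \<phi> (t + S) = \<phi> t))"

definition center_at_origin :: "(real \<times> real \<Rightarrow> real \<times> real) \<Rightarrow> bool" where
  "center_at_origin f \<longleftrightarrow> f 0 = 0 \<and>
     (\<exists>\<epsilon>>0. \<forall>x \<in> ball 0 \<epsilon> - {0}. \<exists>\<phi> T. \<phi> 0 = x \<and> periodic_sol f \<phi> T)"

definition isochronous_center :: "(real \<times> real \<Rightarrow> real \<times> real) \<Rightarrow> bool" where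
  "isochronous_center f \<longleftrightarrow> center_at_origin f \<and>
     (\<exists>\<epsilon>>0. \<exists>T>0. \<forall>x \<in> ball 0 \<epsilon> - {0}. \<exists>\<phi>. \<phi> 0 = x \<and> minimal_period_sol f \<phi> T)"

text \<open>The planar system (Y1, Y2) with parameters d and \<gamma>:
  Y1' = Y2 - d Y1 Y2,   Y2' = - Y1 - (1 - \<gamma>) Y2^2
  (sign of the \<gamma>-term chosen consistently with the Lienard equation and the
  isochronicity condition of the claim).\<close>
definition ep_field :: "nat \<Rightarrow> real \<Rightarrow> real \<times> real \<Rightarrow> real \<times> real" where
  "ep_field d \<gamma> = (\<lambda>(y1, y2). (y2 - real d * y1 * y2, - y1 - y2^2 + \<gamma> * y2^2))"

definition lienard_sol :: "real \<Rightarrow> real \<Rightarrow> real set \<Rightarrow> (real \<Rightarrow> real) \<Rightarrow> bool" where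
  "lienard_sol a b I y \<longleftrightarrow> (\<exists>y'. \<forall>t\<in>I. (y has_real_derivative y' t) (at t) \<and>
       (\<exists>y''. (y' has_real_derivative y'') (at t) \<and> y'' + a * y t * y' t + y t + b * (y t)^3 = 0))"

end

theory Submission
  imports Defs
begin

text \<open>
  With \<open>c = 1 - \<gamma>\<close> and \<open>3 k = 2 c + d\<close> the system becomes \<open>reduced_field c k\<close>; its Lienard
  coefficients are \<open>3 k\<close> and \<open>(3 k - 2 c) c\<close>, and the isochronicity condition reads
  \<open>\<kappa> = (k - c) (k - 2 c) = 0\<close>. In the coordinates \<open>z = (s, y\<^sub>2) / (1 - k s)\<close> with
  \<open>s = y\<^sub>1 + (c - k) y\<^sub>2\<^sup>2\<close>, the angular velocity of \<open>z\<close> along a solution is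
  \<open>-1 + \<kappa> y\<^sub>2\<^sup>4 / (s\<^sup>2 + y\<^sub>2\<^sup>2)\<close>.

  If \<open>\<kappa> = 0\<close>, \<open>z\<close> rotates uniformly, so pulling back the rotations of the plane gives periodic
  orbits, all of minimal period \<open>2 \<pi>\<close>. If \<open>\<kappa> \<noteq> 0\<close> and all small orbits had the common period
  \<open>T\<close>, the orbit through \<open>(0, a)\<close> would wind an integral number \<open>-n\<close> of times around the origin,
  so \<open>T + 2 \<pi> n = \<kappa> \<integral>\<^sub>0\<^sup>T y\<^sub>2\<^sup>4 / (s\<^sup>2 + y\<^sub>2\<^sup>2)\<close>. The right-hand side is nonzero and of order
  \<open>a\<^sup>2 T\<close> (by an energy estimate the orbit stays in the annulus \<open>a/2 < |y| < 2 a\<close>), while the nonzero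
  elements of \<open>T + 2 \<pi> \<int>\<close> are bounded away from \<open>0\<close>.
\<close>

lemma has_vector_derivative_fst_snd:
  assumes "(\<phi> has_vector_derivative D) (at t)"
  shows "((\<lambda>t. fst (\<phi> t)) has_real_derivative fst D) (at t)"
    and "((\<lambda>t. snd (\<phi> t)) has_real_derivative snd D) (at t)"
  using bounded_linear.has_vector_derivative[OF bounded_linear_fst assms]
        bounded_linear.has_vector_derivative[OF bounded_linear_snd assms]
  by (simp_all add: has_real_derivative_iff_has_vector_derivative)

lemma integral_pos_if_continuous_nonneg:
  fixes f :: "real \<Rightarrow> real"
  assumes "continuous_on {a..b} f" "\<And>t. t \<in> {a..b} \<Longrightarrow> 0 \<le> f t" "a < b" "t0 \<in> {a..b}" "0 < f t0"
  shows "0 < integral {a..b} f"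
proof -
  have int: "(f has_integral integral {a..b} f) {a..b}"
    using assms(1) by (intro integrable_integral integrable_continuous_interval)
  have "0 \<le> integral {a..b} f" using assms(2) int by (intro integral_nonneg) auto
  moreover have "integral {a..b} f \<noteq> 0"
  proof
    assume "integral {a..b} f = 0"
    then have "f t0 = 0"
      using has_integral_0_cbox_imp_0[of a b f t0] int assms by auto
    with assms(5) show False by simp
  qed
  ultimately show ?thesis by simp
qed

lemma exp_integral_log_derivative_closed_curve:
  fixes g q :: "real \<Rightarrow> complex"
  assumes "0 \<le> T"
    and g: "\<And>t. t \<in> {0..T} \<Longrightarrow> (g has_vector_derivative q t * g t) (at t)"
    and q: "continuous_on {0..T} q" and "g 0 \<noteq> 0" and "g T = g 0"
  shows "exp (integral {0..T} q) = 1"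
proof -
  define L where "L u = integral {0..u} q" for u
  define h where "h t = g t * exp (- L t)" for t
  have "(h has_derivative (\<lambda>_. 0)) (at t within {0..T})" if t: "t \<in> {0..T}" for t
  proof -
    have L: "(L has_vector_derivative q t) (at t within {0..T})"
      unfolding L_def by (rule integral_has_vector_derivative[OF q t])
    have "((\<lambda>z. exp (- z)) has_field_derivative - exp (- L t)) (at (L t) within L ` {0..T})"
      by (auto intro!: derivative_eq_intros)
    from field_vector_diff_chain_within[OF L this]
    have "((\<lambda>t. exp (- L t)) has_vector_derivative q t * - exp (- L t)) (at t within {0..T})"
      by (simp add: o_def)
    from has_vector_derivative_mult[OF has_vector_derivative_at_within[OF g[OF t]] this]
    have "(h has_vector_derivative 0) (at t within {0..T})"
      unfolding h_def by (simp add: algebra_simps)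
    then show ?thesis by (simp add: has_vector_derivative_def)
  qed
  then have "h T = h 0"
    using has_derivative_zero_constant[of "{0..T}" h] \<open>0 \<le> T\<close> by fastforce
  then show ?thesis
    using \<open>g 0 \<noteq> 0\<close> \<open>g T = g 0\<close> by (simp add: h_def L_def exp_minus field_simps)
qed

lemma closed_curve_angle_integral:
  fixes z w :: "real \<Rightarrow> real \<times> real"
  assumes "0 \<le> T"
    and z: "\<And>t. t \<in> {0..T} \<Longrightarrow> (z has_vector_derivative w t) (at t)"
    and w: "continuous_on {0..T} w"
    and nz: "\<And>t. t \<in> {0..T} \<Longrightarrow> z t \<noteq> 0" and "z T = z 0"
  shows "\<exists>n::int. integral {0..T} (\<lambda>t. (fst (z t) * snd (w t) - snd (z t) * fst (w t))
                                          / ((fst (z t))^2 + (snd (z t))^2)) = 2 * pi * of_int n"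
proof -
  define cpx :: "real \<times> real \<Rightarrow> complex" where "cpx v = of_real (fst v) + \<i> * of_real (snd v)" for v
  define q where "q t = cpx (w t) / cpx (z t)" for t
  have cpx_nz: "cpx (z t) \<noteq> 0" if "t \<in> {0..T}" for t
    using nz[OF that] by (simp add: cpx_def complex_eq_iff prod_eq_iff)
  have "((\<lambda>t. cpx (z t)) has_vector_derivative q t * cpx (z t)) (at t)" if "t \<in> {0..T}" for t
  proof -
    note z' = has_vector_derivative_fst_snd[OF z[OF that]]
    have "((\<lambda>t. cpx (z t)) has_vector_derivative cpx (w t)) (at t)"
      unfolding cpx_def by (intro derivative_eq_intros has_vector_derivative_of_real) (use z' in auto)
    then show ?thesis using cpx_nz[OF that] by (simp add: q_def)
  qed
  moreover have q: "continuous_on {0..T} q"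
  proof -
    have "continuous_on {0..T} z"
      using z by (intro continuous_at_imp_continuous_on ballI has_vector_derivative_continuous)
    then show ?thesis
      unfolding q_def cpx_def using w cpx_nz by (intro continuous_intros) (auto simp: cpx_def)
  qed
  ultimately have "exp (integral {0..T} q) = 1"
    using \<open>0 \<le> T\<close> \<open>z T = z 0\<close> cpx_nz[of 0]
    by (intro exp_integral_log_derivative_closed_curve[where g = "\<lambda>t. cpx (z t)"]) auto
  then obtain n :: int where "Im (integral {0..T} q) = 2 * pi * of_int n"
    by (auto simp: exp_eq_1)
  moreover have "((\<lambda>t. Im (q t)) has_integral Im (integral {0..T} q)) {0..T}"
    using q by (intro has_integral_Im integrable_integral integrable_continuous_interval)
  moreover have "(\<lambda>t. Im (q t)) = (\<lambda>t. (fst (z t) * snd (w t) - snd (z t) * fst (w t)) / ((fst (z t))^2 + (snd (z t))^2))"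
    by (simp add: q_def cpx_def Im_divide algebra_simps fun_eq_iff)
  ultimately show ?thesis using integral_unique by metis
qed

lemma int_multiples_gap:
  fixes p u :: real
  assumes "0 < p"
  shows "\<exists>\<delta>>0. \<forall>n::int. of_int n * p + u \<noteq> 0 \<longrightarrow> \<delta> \<le> \<bar>of_int n * p + u\<bar>"
proof -
  define f where "f = u / p - of_int \<lfloor>u / p\<rfloor>"
  have f: "0 \<le> f" "f < 1" unfolding f_def by linarith+
  define \<delta> where "\<delta> = (if f = 0 then 1 else min f (1 - f))"
  have gap: "\<delta> \<le> \<bar>of_int m + f\<bar>" if "of_int m + f \<noteq> 0" for m :: int
  proof (cases "0 \<le> m")
    case True
    with that f show ?thesis by (auto simp: \<delta>_def)
  next
    case False
    then have "of_int m \<le> (-1::real)" by simp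
    with f show ?thesis by (auto simp: \<delta>_def)
  qed
  have "0 < \<delta>" using f by (auto simp: \<delta>_def)
  moreover have "p * \<delta> \<le> \<bar>of_int n * p + u\<bar>" if "of_int n * p + u \<noteq> 0" for n :: int
  proof -
    have "of_int n * p + u = p * (of_int (n + \<lfloor>u / p\<rfloor>) + f)"
      using assms by (simp add: f_def field_simps)
    with gap[of "n + \<lfloor>u / p\<rfloor>"] that assms show ?thesis by (simp add: abs_mult)
  qed
  ultimately show ?thesis
    using assms by (intro exI[of _ "p * \<delta>"]) auto
qed

definition rotation :: "real \<times> real \<Rightarrow> real \<Rightarrow> real \<times> real" where
  "rotation z t = (fst z * cos t + snd z * sin t, snd z * cos t - fst z * sin t)"

lemma rotation_0 [simp]: "rotation z 0 = z"
  by (simp add: rotation_def)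

lemma rotation_periodic: "rotation z (t + 2 * pi) = rotation z t"
  by (simp add: rotation_def)

lemma norm_rotation [simp]: "norm (rotation z t) = norm z"
proof -
  have "(fst z * cos t + snd z * sin t)^2 + (snd z * cos t - fst z * sin t)^2 = (fst z)^2 + (snd z)^2"
    using sin_cos_squared_add[of t] by algebra
  then show ?thesis by (simp add: rotation_def norm_Pair norm_prod_def)
qed

lemma rotation_has_vector_derivative:
  "(rotation z has_vector_derivative (snd (rotation z t), - fst (rotation z t))) (at t)"
  unfolding rotation_def[abs_def]
  by (auto intro!: derivative_eq_intros has_vector_derivative_Pair
           simp: has_real_derivative_iff_has_vector_derivative[symmetric] algebra_simps)

lemma rotation_fixed_point:
  assumes "0 < S" "S < 2 * pi" "rotation z S = z"
  shows "z = 0"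
proof -
  have "cos S \<noteq> 1"
  proof
    assume "cos S = 1"
    then obtain n :: int where "S = of_int n * 2 * pi" by (auto simp: cos_one_2pi_int)
    with assms(1,2) have "(0::real) < of_int n" "of_int n < (1::real)"
      by (auto simp: zero_less_mult_iff mult_less_cancel_right)
    then have "0 < n" "n < 1" by simp_all
    then show False by simp
  qed
  then have nz: "(cos S - 1)^2 + (sin S)^2 \<noteq> 0"
    by (simp add: add_nonneg_eq_0_iff)
  let ?a = "fst z" and ?b = "snd z"
  have e1: "?a * (cos S - 1) + ?b * sin S = 0" and e2: "?b * (cos S - 1) - ?a * sin S = 0"
    using assms(3) by (auto simp: rotation_def prod_eq_iff algebra_simps)
  have "?a * ((cos S - 1)^2 + (sin S)^2) = 0" "?b * ((cos S - 1)^2 + (sin S)^2) = 0"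
    using e1 e2 by algebra+
  then have "?a = 0" "?b = 0" using nz by (metis mult_eq_0_iff)+
  then show ?thesis by (simp add: prod_eq_iff)
qed

section \<open>The reduced system and its Lienard form\<close>

definition reduced_field :: "real \<Rightarrow> real \<Rightarrow> real \<times> real \<Rightarrow> real \<times> real" where
  "reduced_field c k = (\<lambda>(y1, y2). (y2 - (3 * k - 2 * c) * y1 * y2, - y1 - c * y2^2))"

lemma ep_field_eq_reduced_field:
  "ep_field d \<gamma> = reduced_field (1 - \<gamma>) ((2 * (1 - \<gamma>) + real d) / 3)"
  by (simp add: ep_field_def reduced_field_def fun_eq_iff field_simps)

lemma reduced_field_solution_derivs:
  assumes "(y has_vector_derivative reduced_field c k (y t)) (at t)"
  shows "((\<lambda>t. fst (y t)) has_real_derivative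
            snd (y t) - (3 * k - 2 * c) * fst (y t) * snd (y t)) (at t)"
    and "((\<lambda>t. snd (y t)) has_real_derivative - fst (y t) - c * (snd (y t))^2) (at t)"
  using has_vector_derivative_fst_snd[OF assms]
  by (simp_all add: reduced_field_def case_prod_beta)

lemma reduced_field_lienard:
  assumes "ode_sol_on (reduced_field c k) I y"
  shows "lienard_sol (3 * k) ((3 * k - 2 * c) * c) I (\<lambda>t. snd (y t))"
  unfolding lienard_sol_def
proof (intro exI[of _ "\<lambda>t. - fst (y t) - c * (snd (y t))^2"] ballI conjI)
  fix t assume "t \<in> I"
  then have y: "(y has_vector_derivative reduced_field c k (y t)) (at t)"
    using assms by (simp add: ode_sol_on_def)
  note y1 = reduced_field_solution_derivs(1)[OF y] and y2 = reduced_field_solution_derivs(2)[OF y]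
  show "((\<lambda>t. snd (y t)) has_real_derivative - fst (y t) - c * (snd (y t))^2) (at t)"
    by (rule y2)
  have "((\<lambda>t. - fst (y t) - c * (snd (y t))^2) has_real_derivative
      - (snd (y t) - (3 * k - 2 * c) * fst (y t) * snd (y t))
      - c * (2 * snd (y t) * (- fst (y t) - c * (snd (y t))^2))) (at t)"
    by (auto intro!: derivative_eq_intros y1 y2)
  then show "\<exists>y''. ((\<lambda>t. - fst (y t) - c * (snd (y t))^2) has_real_derivative y'') (at t) \<and>
      y'' + 3 * k * snd (y t) * (- fst (y t) - c * (snd (y t))^2) + snd (y t)
        + (3 * k - 2 * c) * c * snd (y t) ^ 3 = 0"
    by (intro exI conjI) (auto simp: algebra_simps power2_eq_square power3_eq_cube)
qed

lemma isochronicity_condition_factored: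
  fixes c dd :: real
  shows "(2 * c + dd)^2 = 9 * dd * c \<longleftrightarrow> (dd - c) * (dd - 4 * c) = 0"
proof -
  have "(2 * c + dd)^2 - 9 * dd * c = (dd - c) * (dd - 4 * c)"
    by (simp add: algebra_simps power2_eq_square)
  then show ?thesis by (metis eq_iff_diff_eq_0)
qed

lemma isochronicity_condition_kappa:
  fixes c dd :: real
  shows "(2 * c + dd)^2 = 9 * dd * c \<longleftrightarrow> ((2 * c + dd) / 3 - c) * ((2 * c + dd) / 3 - 2 * c) = 0"
proof -
  have "(2 * c + dd)^2 - 9 * dd * c = 9 * (((2 * c + dd) / 3 - c) * ((2 * c + dd) / 3 - 2 * c))"
    by (simp add: field_simps power2_eq_square)
  then show ?thesis by (metis eq_iff_diff_eq_0 mult_eq_0_iff zero_neq_numeral)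
qed

section \<open>Linearizing coordinates\<close>

definition lin_s :: "real \<Rightarrow> real \<Rightarrow> real \<times> real \<Rightarrow> real" where
  "lin_s c k y = fst y + (c - k) * (snd y)^2"

definition lin_den :: "real \<Rightarrow> real \<Rightarrow> real \<times> real \<Rightarrow> real" where
  "lin_den c k y = 1 - k * lin_s c k y"

definition lin_coords :: "real \<Rightarrow> real \<Rightarrow> real \<times> real \<Rightarrow> real \<times> real" where
  "lin_coords c k y = (lin_s c k y / lin_den c k y, snd y / lin_den c k y)"

definition lin_coords_inv :: "real \<Rightarrow> real \<Rightarrow> real \<times> real \<Rightarrow> real \<times> real" where
  "lin_coords_inv c k z =
     (fst z / (1 + k * fst z) - (c - k) * (snd z)^2 / (1 + k * fst z)^2, snd z / (1 + k * fst z))"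

lemma lin_coords_inv_lin_coords:
  assumes "lin_den c k y \<noteq> 0"
  shows "lin_coords_inv c k (lin_coords c k y) = y"
proof -
  have "1 + k * (lin_s c k y / lin_den c k y) = 1 / lin_den c k y"
    using assms by (simp add: lin_den_def field_simps)
  then show ?thesis
    using assms by (simp add: lin_coords_inv_def lin_coords_def lin_s_def power_divide prod_eq_iff)
qed

lemma lin_coords_lin_coords_inv:
  assumes "1 + k * fst z \<noteq> 0"
  shows "lin_coords c k (lin_coords_inv c k z) = z"
proof -
  have s: "lin_s c k (lin_coords_inv c k z) = fst z / (1 + k * fst z)"
    by (simp add: lin_s_def lin_coords_inv_def power_divide)
  have "lin_den c k (lin_coords_inv c k z) = 1 / (1 + k * fst z)"
    using assms by (simp add: lin_den_def s field_simps)
  then show ?thesis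
    unfolding lin_coords_def s using assms by (simp add: lin_coords_inv_def prod_eq_iff)
qed

lemma lin_coords_near_origin:
  "\<exists>\<rho>>0. \<forall>y. norm y < \<rho> \<longrightarrow> 0 < lin_den c k y \<and> \<bar>k\<bar> * norm (lin_coords c k y) < 1"
proof -
  have s: "isCont (lin_s c k) 0"
    unfolding lin_s_def[abs_def] by (intro continuous_intros)
  then have den: "isCont (lin_den c k) 0"
    unfolding lin_den_def[abs_def] by (intro continuous_intros)
  have den0: "lin_den c k 0 = 1" by (simp add: lin_den_def lin_s_def)
  have "isCont (lin_coords c k) 0"
    unfolding lin_coords_def[abs_def] using s den den0 by (intro continuous_intros) auto
  moreover have "lin_coords c k 0 = 0" by (simp add: lin_coords_def lin_s_def zero_prod_def)
  ultimately have "((\<lambda>y. \<bar>k\<bar> * norm (lin_coords c k y)) \<longlongrightarrow> 0) (nhds 0)"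
    by (auto intro!: tendsto_eq_intros simp: isCont_def tendsto_nhds_iff)
  then have "\<forall>\<^sub>F y in nhds 0. \<bar>k\<bar> * norm (lin_coords c k y) < 1"
    by (rule order_tendstoD(2)) simp
  moreover have "(lin_den c k \<longlongrightarrow> 1) (nhds 0)"
    using den den0 by (simp add: isCont_def tendsto_nhds_iff)
  then have "\<forall>\<^sub>F y in nhds 0. 0 < lin_den c k y"
    by (rule order_tendstoD(1)) simp
  ultimately have "\<forall>\<^sub>F y in nhds 0. 0 < lin_den c k y \<and> \<bar>k\<bar> * norm (lin_coords c k y) < 1"
    by (rule eventually_conj[rotated])
  then show ?thesis
    unfolding eventually_nhds_metric dist_norm by simp
qed

section \<open>The isochronous case\<close>

lemma lin_coords_inv_solution:
  assumes kappa: "(k - c) * (k - 2 * c) = 0"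
    and z: "(z has_vector_derivative (snd (z t), - fst (z t))) (at t)"
    and U: "1 + k * fst (z t) \<noteq> 0"
  shows "((\<lambda>t. lin_coords_inv c k (z t)) has_vector_derivative
           reduced_field c k (lin_coords_inv c k (z t))) (at t)"
proof -
  note z1 = has_vector_derivative_fst_snd(1)[OF z, simplified]
    and z2 = has_vector_derivative_fst_snd(2)[OF z, simplified]
  define p q where "p = fst (z t)" and "q = snd (z t)"
  have d1: "((\<lambda>t. fst (lin_coords_inv c k (z t))) has_real_derivative
      q / (1 + k * p)^2 + 2 * (c - k) * q * (p * (1 + k * p) + k * q^2) / (1 + k * p)^3) (at t)"
    unfolding lin_coords_inv_def fst_conv
    apply (rule derivative_eq_intros z1 z2 refl | simp add: U)+
    unfolding p_def[symmetric] q_def[symmetric] power2_eq_square[symmetric]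
    using U apply (simp add: p_def field_simps)
    apply algebra
    done
  have d2: "((\<lambda>t. snd (lin_coords_inv c k (z t))) has_real_derivative
      (- p * (1 + k * p) - q * (k * q)) / ((1 + k * p) * (1 + k * p))) (at t)"
    unfolding lin_coords_inv_def snd_conv p_def q_def
    by (rule DERIV_divide) (auto intro!: derivative_eq_intros z1 z2 U)
  \<comment> \<open>The denominator is abstracted to a variable so that field_simps does not expand it.\<close>
  have fst_eq: "q / V^2 + 2 * (c - k) * q * (p * V + k * q^2) / V^3
      = fst (reduced_field c k (lin_coords_inv c k (z t)))" if V: "V = 1 + k * p" for V
  proof -
    have "V \<noteq> 0" using U V by (simp add: p_def)
    have "q * V + 2 * (c - k) * q * (p * V + k * q^2)
        = q * V^2 - (3 * k - 2 * c) * (p * V - (c - k) * q^2) * q"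
      using V kappa by algebra
    then have "q / V^2 + 2 * (c - k) * q * (p * V + k * q^2) / V^3
        = q / V - (3 * k - 2 * c) * (p / V - (c - k) * q^2 / V^2) * (q / V)"
      using \<open>V \<noteq> 0\<close> by (simp add: field_simps power2_eq_square power3_eq_cube)
    then show ?thesis using V by (simp add: reduced_field_def lin_coords_inv_def p_def q_def)
  qed
  have snd_eq: "(- p * V - q * (k * q)) / (V * V) = snd (reduced_field c k (lin_coords_inv c k (z t)))"
    if V: "V = 1 + k * p" for V
  proof -
    have "V \<noteq> 0" using U V by (simp add: p_def)
    then have "(- p * V - q * (k * q)) / (V * V) = - (p / V - (c - k) * q^2 / V^2) - c * (q / V)^2"
      by (simp add: field_simps power2_eq_square)
    then show ?thesis using V by (simp add: reduced_field_def lin_coords_inv_def p_def q_def)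
  qed
  show ?thesis
    using has_vector_derivative_Pair[OF d1[unfolded has_real_derivative_iff_has_vector_derivative]
        d2[unfolded has_real_derivative_iff_has_vector_derivative]]
    unfolding fst_eq[OF refl] snd_eq[OF refl] by simp
qed

lemma lin_coords_inv_rotation_minimal_period:
  assumes kappa: "(k - c) * (k - 2 * c) = 0" and small: "\<bar>k\<bar> * norm z < 1" and "z \<noteq> 0"
  shows "minimal_period_sol (reduced_field c k) (\<lambda>t. lin_coords_inv c k (rotation z t)) (2 * pi)"
proof -
  have U: "1 + k * fst (rotation z t) \<noteq> 0" for t
  proof -
    have "\<bar>k * fst (rotation z t)\<bar> \<le> \<bar>k\<bar> * norm z"
      using norm_fst_le[of "fst (rotation z t)" "snd (rotation z t)"]
      by (simp add: abs_mult mult_left_mono)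
    then show ?thesis using small by linarith
  qed
  have "ode_sol (reduced_field c k) (\<lambda>t. lin_coords_inv c k (rotation z t))"
    unfolding ode_sol_def using lin_coords_inv_solution[OF kappa rotation_has_vector_derivative U] by blast
  moreover have "\<not> (\<forall>t. lin_coords_inv c k (rotation z (t + S)) = lin_coords_inv c k (rotation z t))"
    if "0 < S" "S < 2 * pi" for S
  proof
    assume "\<forall>t. lin_coords_inv c k (rotation z (t + S)) = lin_coords_inv c k (rotation z t)"
    then have "lin_coords c k (lin_coords_inv c k (rotation z S)) = lin_coords c k (lin_coords_inv c k (rotation z 0))"
      by (metis add_0)
    then have "rotation z S = z" using U[of S] U[of 0] by (simp add: lin_coords_lin_coords_inv)
    then show False using rotation_fixed_point that \<open>z \<noteq> 0\<close> by blast
  qed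
  ultimately show ?thesis
    by (simp add: minimal_period_sol_def periodic_sol_def rotation_periodic)
qed

lemma isochronous_center_reduced_field:
  assumes kappa: "(k - c) * (k - 2 * c) = 0"
  shows "isochronous_center (reduced_field c k)"
proof -
  obtain \<rho> where "\<rho> > 0"
    and \<rho>: "\<And>y. norm y < \<rho> \<Longrightarrow> 0 < lin_den c k y \<and> \<bar>k\<bar> * norm (lin_coords c k y) < 1"
    using lin_coords_near_origin by blast
  have orbit: "\<exists>\<phi>. \<phi> 0 = x \<and> minimal_period_sol (reduced_field c k) \<phi> (2 * pi)"
    if "x \<in> ball 0 \<rho> - {0}" for x
  proof -
    from that have den: "lin_den c k x \<noteq> 0" and small: "\<bar>k\<bar> * norm (lin_coords c k x) < 1" and "x \<noteq> 0"
      using \<rho>[of x] by (auto simp: dist_norm)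
    have "lin_coords c k x \<noteq> 0"
    proof
      assume "lin_coords c k x = 0"
      then have "x = lin_coords_inv c k 0" using lin_coords_inv_lin_coords[OF den] by simp
      then show False using \<open>x \<noteq> 0\<close> by (simp add: lin_coords_inv_def zero_prod_def)
    qed
    then show ?thesis
      using lin_coords_inv_rotation_minimal_period[OF kappa small] lin_coords_inv_lin_coords[OF den]
      by (intro exI[of _ "\<lambda>t. lin_coords_inv c k (rotation (lin_coords c k x) t)"]) simp
  qed
  have "reduced_field c k 0 = 0" by (simp add: reduced_field_def zero_prod_def)
  moreover have "\<exists>\<epsilon>>0. \<forall>x \<in> ball 0 \<epsilon> - {0}. \<exists>\<phi> T. \<phi> 0 = x \<and> periodic_sol (reduced_field c k) \<phi> T"
    using orbit \<open>\<rho> > 0\<close> unfolding minimal_period_sol_def by blast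
  moreover have "\<exists>\<epsilon>>0. \<exists>T>0. \<forall>x \<in> ball 0 \<epsilon> - {0}.
      \<exists>\<phi>. \<phi> 0 = x \<and> minimal_period_sol (reduced_field c k) \<phi> T"
    using orbit \<open>\<rho> > 0\<close> pi_gt_zero by (metis mult_pos_pos zero_less_numeral)
  ultimately show ?thesis unfolding isochronous_center_def center_at_origin_def by blast
qed

section \<open>The non-isochronous case\<close>

definition lin_s_dot :: "real \<Rightarrow> real \<Rightarrow> real \<times> real \<Rightarrow> real" where
  "lin_s_dot c k y = fst (reduced_field c k y) + 2 * (c - k) * snd y * snd (reduced_field c k y)"

definition lin_coords_dot :: "real \<Rightarrow> real \<Rightarrow> real \<times> real \<Rightarrow> real \<times> real" where
  "lin_coords_dot c k y = (lin_s_dot c k y / (lin_den c k y)^2,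
     (snd (reduced_field c k y) * lin_den c k y + k * snd y * lin_s_dot c k y) / (lin_den c k y)^2)"

definition angular_defect :: "real \<Rightarrow> real \<Rightarrow> real \<times> real \<Rightarrow> real" where
  "angular_defect c k y = (snd y)^4 / ((lin_s c k y)^2 + (snd y)^2)"

lemma lin_coords_has_vector_derivative:
  assumes y: "(y has_vector_derivative reduced_field c k (y t)) (at t)"
    and D: "lin_den c k (y t) \<noteq> 0"
  shows "((\<lambda>t. lin_coords c k (y t)) has_vector_derivative lin_coords_dot c k (y t)) (at t)"
proof -
  note y1 = has_vector_derivative_fst_snd(1)[OF y] and y2 = has_vector_derivative_fst_snd(2)[OF y]
  have s: "((\<lambda>t. lin_s c k (y t)) has_real_derivative lin_s_dot c k (y t)) (at t)"
    unfolding lin_s_def lin_s_dot_def by (auto intro!: derivative_eq_intros y1 y2)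
  have den: "((\<lambda>t. lin_den c k (y t)) has_real_derivative - k * lin_s_dot c k (y t)) (at t)"
    unfolding lin_den_def by (auto intro!: derivative_eq_intros s)
  have "((\<lambda>t. lin_s c k (y t) / lin_den c k (y t)) has_real_derivative fst (lin_coords_dot c k (y t))) (at t)"
    by (rule DERIV_cong[OF DERIV_divide[OF s den D]])
       (use D in \<open>simp add: lin_coords_dot_def lin_den_def field_simps power2_eq_square\<close>)
  moreover have "((\<lambda>t. snd (y t) / lin_den c k (y t)) has_real_derivative snd (lin_coords_dot c k (y t))) (at t)"
    by (rule DERIV_cong[OF DERIV_divide[OF y2 den D]])
       (use D in \<open>simp add: lin_coords_dot_def field_simps power2_eq_square\<close>)
  ultimately show ?thesis
    using has_vector_derivative_Pair unfolding lin_coords_def has_real_derivative_iff_has_vector_derivative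
    by fastforce
qed

lemma lin_coords_angular_velocity:
  assumes D: "lin_den c k y \<noteq> 0" and "y \<noteq> 0"
  shows "(fst (lin_coords c k y) * snd (lin_coords_dot c k y)
            - snd (lin_coords c k y) * fst (lin_coords_dot c k y))
           / ((fst (lin_coords c k y))^2 + (snd (lin_coords c k y))^2)
         = -1 + (k - c) * (k - 2 * c) * angular_defect c k y"
proof -
  define s D' ds n N where "s = lin_s c k y" and "D' = lin_den c k y" and "ds = lin_s_dot c k y"
    and "n = snd (reduced_field c k y) * D' + k * snd y * ds" and "N = s^2 + (snd y)^2"
  have "N \<noteq> 0"
    using \<open>y \<noteq> 0\<close> by (auto simp: N_def s_def lin_s_def prod_eq_iff)
  have key: "s * n - snd y * ds = ((k - c) * (k - 2 * c) * (snd y)^4 - N) * D'"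
    unfolding n_def ds_def D'_def lin_den_def s_def N_def lin_s_def lin_s_dot_def reduced_field_def
    by (simp add: case_prod_beta) algebra
  have "fst (lin_coords c k y) * snd (lin_coords_dot c k y) - snd (lin_coords c k y) * fst (lin_coords_dot c k y)
      = (s * n - snd y * ds) / D'^3"
    using D by (simp add: lin_coords_def lin_coords_dot_def s_def D'_def ds_def n_def
        field_simps power2_eq_square power3_eq_cube)
  moreover have "(fst (lin_coords c k y))^2 + (snd (lin_coords c k y))^2 = N / D'^2"
    by (simp add: lin_coords_def N_def s_def D'_def power_divide add_divide_distrib)
  ultimately have "(fst (lin_coords c k y) * snd (lin_coords_dot c k y)
            - snd (lin_coords c k y) * fst (lin_coords_dot c k y))
           / ((fst (lin_coords c k y))^2 + (snd (lin_coords c k y))^2)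
      = (((k - c) * (k - 2 * c) * (snd y)^4 - N) * D' / D'^3) / (N / D'^2)"
    by (simp only: key)
  also have "\<dots> = -1 + (k - c) * (k - 2 * c) * ((snd y)^4 / N)"
    using D \<open>N \<noteq> 0\<close> by (simp add: D'_def field_simps power2_eq_square power3_eq_cube)
  finally show ?thesis by (simp add: angular_defect_def N_def s_def)
qed

lemma angular_defect_bounds: "0 \<le> angular_defect c k y" "angular_defect c k y \<le> (snd y)^2"
proof -
  show "0 \<le> angular_defect c k y" by (simp add: angular_defect_def)
  have "(snd y)^2 * ((lin_s c k y)^2 + (snd y)^2) = (snd y)^4 + (snd y * lin_s c k y)^2"
    by (simp add: algebra_simps power2_eq_square power4_eq_xxxx)
  then have "(snd y)^4 \<le> (snd y)^2 * ((lin_s c k y)^2 + (snd y)^2)"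
    by simp
  then show "angular_defect c k y \<le> (snd y)^2"
  proof (cases "(lin_s c k y)^2 + (snd y)^2 = 0")
    case False
    then have "0 < (lin_s c k y)^2 + (snd y)^2" by (simp add: order_le_neq_trans)
    with \<open>(snd y)^4 \<le> _\<close> show ?thesis
      unfolding angular_defect_def by (subst pos_divide_le_eq) (simp_all add: mult.commute)
  qed (simp add: angular_defect_def)
qed

lemma isCont_angular_defect:
  assumes "isCont y t" "y t \<noteq> 0"
  shows "isCont (\<lambda>t. angular_defect c k (y t)) t"
proof -
  have "(lin_s c k (y t))^2 + (snd (y t))^2 \<noteq> 0"
    using assms(2) by (auto simp: lin_s_def prod_eq_iff)
  then show ?thesis
    unfolding angular_defect_def lin_s_def by (intro continuous_intros assms(1)) (simp add: lin_s_def)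
qed

lemma reduced_field_energy_rate_bound:
  fixes y1 y2 a :: real
  assumes "y1^2 + y2^2 \<le> 4 * a^2" "0 \<le> a"
  shows "\<bar>2 * y1 * (y2 - (3 * k - 2 * c) * y1 * y2) + 2 * y2 * (- y1 - c * y2^2)\<bar>
         \<le> 16 * (\<bar>3 * k - 2 * c\<bar> + \<bar>c\<bar> + 1) * a^3"
proof -
  define dd where "dd = 3 * k - 2 * c"
  have sq: "y1^2 \<le> 4 * a^2" "y2^2 \<le> 4 * a^2"
    using assms(1) zero_le_power2[of y1] zero_le_power2[of y2] by linarith+
  have y2: "\<bar>y2\<bar> \<le> 2 * a"
    using abs_le_square_iff[of y2 "2 * a"] sq(2) assms(2) by (simp add: power_mult_distrib)
  have "\<bar>dd * y1^2 + c * y2^2\<bar> \<le> \<bar>dd\<bar> * (4 * a^2) + \<bar>c\<bar> * (4 * a^2)"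
    using sq by (intro order_trans[OF abs_triangle_ineq] add_mono)
       (auto simp: abs_mult intro: mult_left_mono)
  also have "\<dots> \<le> (\<bar>dd\<bar> + \<bar>c\<bar> + 1) * (4 * a^2)" by (simp add: algebra_simps)
  finally have bound: "2 * \<bar>y2\<bar> * \<bar>dd * y1^2 + c * y2^2\<bar> \<le> 2 * (2 * a) * ((\<bar>dd\<bar> + \<bar>c\<bar> + 1) * (4 * a^2))"
    using y2 by (intro mult_mono) auto
  have "2 * y1 * (y2 - dd * y1 * y2) + 2 * y2 * (- y1 - c * y2^2) = -2 * y2 * (dd * y1^2 + c * y2^2)"
    by (simp add: algebra_simps power2_eq_square)
  then have "\<bar>2 * y1 * (y2 - dd * y1 * y2) + 2 * y2 * (- y1 - c * y2^2)\<bar> = 2 * \<bar>y2\<bar> * \<bar>dd * y1^2 + c * y2^2\<bar>"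
    by (simp add: abs_mult)
  also note bound
  also have "2 * (2 * a) * ((\<bar>dd\<bar> + \<bar>c\<bar> + 1) * (4 * a^2)) = 16 * (\<bar>dd\<bar> + \<bar>c\<bar> + 1) * a^3"
    by (simp add: power2_eq_square power3_eq_cube)
  finally show ?thesis unfolding dd_def .
qed

lemma reduced_field_energy_annulus:
  assumes sol: "\<And>t. (y has_vector_derivative reduced_field c k (y t)) (at t)"
    and E0: "(fst (y 0))^2 + (snd (y 0))^2 = a^2" and "0 < a"
    and small: "a * (64 * (\<bar>3 * k - 2 * c\<bar> + \<bar>c\<bar> + 1) * T) < 3"
    and "t \<in> {0..T}"
  shows "a^2 / 4 < (fst (y t))^2 + (snd (y t))^2 \<and> (fst (y t))^2 + (snd (y t))^2 < 4 * a^2"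
proof (rule ccontr)
  define E where "E t = (fst (y t))^2 + (snd (y t))^2" for t
  define K where "K = \<bar>3 * k - 2 * c\<bar> + \<bar>c\<bar> + 1"
  define S where "S = {t. 0 \<le> t \<and> t \<le> T \<and> (E t \<le> a^2 / 4 \<or> 4 * a^2 \<le> E t)}"
  have dE: "(E has_real_derivative 2 * fst (y t) * (snd (y t) - (3 * k - 2 * c) * fst (y t) * snd (y t))
      + 2 * snd (y t) * (- fst (y t) - c * (snd (y t))^2)) (at t)" for t
    unfolding E_def by (auto intro!: derivative_eq_intros reduced_field_solution_derivs[OF sol])
  then have "continuous_on UNIV E"
    by (intro continuous_at_imp_continuous_on) (blast intro: DERIV_isCont)
  then have "closed S"
    unfolding S_def by (intro closed_Collect_conj closed_Collect_disj closed_Collect_le continuous_intros)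
  assume "\<not> ?thesis"
  then have "S \<noteq> {}" using \<open>t \<in> {0..T}\<close> by (force simp: S_def E_def)
  moreover have "bdd_below S" by (rule bdd_belowI[of _ 0]) (auto simp: S_def)
  ultimately have "Inf S \<in> S" using \<open>closed S\<close> by (rule closed_contains_Inf)
  define t1 where "t1 = Inf S"
  have t1: "0 \<le> t1" "t1 \<le> T" "E t1 \<le> a^2 / 4 \<or> 4 * a^2 \<le> E t1"
    using \<open>Inf S \<in> S\<close> by (auto simp: S_def t1_def)
  have "E 0 = a^2" using E0 by (simp add: E_def)
  then have "0 < t1" using t1 \<open>0 < a\<close> by (cases "t1 = 0") (auto simp: power2_eq_square)
  have before_exit: "E s < 4 * a^2" if "0 \<le> s" "s < t1" for s
    using cInf_lower[OF _ \<open>bdd_below S\<close>, of s] that t1 by (force simp: S_def t1_def)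
  obtain s where s: "0 < s" "s < t1" "E t1 - E 0 = (t1 - 0) * (2 * fst (y s) * (snd (y s)
      - (3 * k - 2 * c) * fst (y s) * snd (y s)) + 2 * snd (y s) * (- fst (y s) - c * (snd (y s))^2))"
    using MVT2[OF \<open>0 < t1\<close> dE] by blast
  have "\<bar>E t1 - a^2\<bar> \<le> t1 * (16 * K * a^3)"
    using s reduced_field_energy_rate_bound[of "fst (y s)" "snd (y s)" a k c] before_exit[of s]
      \<open>E 0 = a^2\<close> \<open>0 < a\<close> \<open>0 < t1\<close>
    by (simp add: abs_mult E_def K_def mult_left_mono)
  also have "\<dots> \<le> T * (16 * K * a^3)"
    using t1 \<open>0 < a\<close> by (intro mult_right_mono) (auto simp: K_def)
  also have "\<dots> = a^2 * (a * (16 * K * T))" by (simp add: power2_eq_square power3_eq_cube)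
  also have "\<dots> < a^2 * (3 / 4)"
    using \<open>0 < a\<close> small by (intro mult_strict_left_mono) (auto simp: K_def algebra_simps)
  finally show False using t1(3) \<open>0 < a\<close> by (auto simp: abs_if split: if_splits)
qed

lemma reduced_field_winding:
  assumes sol: "\<And>t. (y has_vector_derivative reduced_field c k (y t)) (at t)"
    and "0 \<le> T" and "y T = y 0"
    and den: "\<And>t. t \<in> {0..T} \<Longrightarrow> lin_den c k (y t) \<noteq> 0"
    and nz: "\<And>t. t \<in> {0..T} \<Longrightarrow> y t \<noteq> 0"
  shows "\<exists>n::int. (k - c) * (k - 2 * c) * integral {0..T} (\<lambda>t. angular_defect c k (y t)) - T = 2 * pi * of_int n"
proof -
  define \<kappa> r where "\<kappa> = (k - c) * (k - 2 * c)" and "r t = angular_defect c k (y t)" for t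
  have cont_y: "isCont y t" for t
    using sol by (rule has_vector_derivative_continuous)
  have lin_coords_nz: "lin_coords c k (y t) \<noteq> 0" if "t \<in> {0..T}" for t
  proof
    assume "lin_coords c k (y t) = 0"
    then have "y t = lin_coords_inv c k 0" using lin_coords_inv_lin_coords[OF den[OF that]] by metis
    then show False using nz[OF that] by (simp add: lin_coords_inv_def zero_prod_def)
  qed
  have cont_dot: "continuous_on {0..T} (\<lambda>t. lin_coords_dot c k (y t))"
    unfolding lin_coords_dot_def lin_s_dot_def lin_den_def lin_s_def reduced_field_def case_prod_beta
    using den by (intro continuous_at_imp_continuous_on ballI continuous_intros cont_y)
      (auto simp: lin_den_def lin_s_def)
  obtain n :: int where n: "integral {0..T} (\<lambda>t. (fst (lin_coords c k (y t)) * snd (lin_coords_dot c k (y t))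
      - snd (lin_coords c k (y t)) * fst (lin_coords_dot c k (y t)))
      / ((fst (lin_coords c k (y t)))^2 + (snd (lin_coords c k (y t)))^2)) = 2 * pi * of_int n"
    using closed_curve_angle_integral[OF \<open>0 \<le> T\<close> lin_coords_has_vector_derivative[OF sol den] cont_dot lin_coords_nz]
    by (auto simp: \<open>y T = y 0\<close>)
  have "continuous_on {0..T} r"
    unfolding r_def using nz by (intro continuous_at_imp_continuous_on ballI isCont_angular_defect cont_y)
  then have "(r has_integral integral {0..T} r) {0..T}"
    by (intro integrable_integral integrable_continuous_interval)
  from has_integral_add[OF has_integral_const_real[of "-1" 0 T] has_integral_mult_right[OF this, of \<kappa>]]
  have "((\<lambda>t. -1 + \<kappa> * r t) has_integral (- T + \<kappa> * integral {0..T} r)) {0..T}"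
    using \<open>0 \<le> T\<close> by simp
  then have "- T + \<kappa> * integral {0..T} r = integral {0..T} (\<lambda>t. -1 + \<kappa> * r t)"
    by (rule integral_unique[symmetric])
  also have "\<dots> = 2 * pi * of_int n"
    unfolding n[symmetric] by (rule integral_cong) (simp add: lin_coords_angular_velocity den nz \<kappa>_def r_def)
  finally show ?thesis unfolding r_def[abs_def] \<kappa>_def by auto
qed

lemma small_periodic_solution_winding:
  assumes sol: "\<And>t. (y has_vector_derivative reduced_field c k (y t)) (at t)"
    and "y T = y 0" "y 0 = (0, a)" "0 < a" "0 < T"
    and \<rho>: "\<And>v. norm v < \<rho> \<Longrightarrow> 0 < lin_den c k v" and "2 * a < \<rho>"
    and small: "a * (64 * (\<bar>3 * k - 2 * c\<bar> + \<bar>c\<bar> + 1) * T) < 3"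
  shows "\<exists>R n. 0 < R \<and> R \<le> 4 * a^2 * T \<and> (k - c) * (k - 2 * c) * R - T = 2 * pi * of_int n"
proof -
  have annulus: "a^2 / 4 < (fst (y t))^2 + (snd (y t))^2 \<and> (fst (y t))^2 + (snd (y t))^2 < 4 * a^2"
    if "t \<in> {0..T}" for t
    using reduced_field_energy_annulus[OF sol _ \<open>0 < a\<close> small that] \<open>y 0 = (0, a)\<close> by simp
  have "norm (y t) < \<rho>" if "t \<in> {0..T}" for t
  proof -
    have "sqrt ((fst (y t))^2 + (snd (y t))^2) < sqrt ((2 * a)^2)"
      using annulus[OF that] by (intro real_sqrt_less_mono) (simp add: power_mult_distrib)
    moreover have "norm (y t) = sqrt ((fst (y t))^2 + (snd (y t))^2)" by (simp add: norm_prod_def)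
    moreover have "\<bar>2 * a\<bar> = 2 * a" using \<open>0 < a\<close> by simp
    ultimately show ?thesis
      using real_sqrt_abs[of "2 * a"] \<open>2 * a < \<rho>\<close> by linarith
  qed
  then have den: "lin_den c k (y t) \<noteq> 0" if "t \<in> {0..T}" for t
    using \<rho> that by (metis less_irrefl)
  have nz: "y t \<noteq> 0" if "t \<in> {0..T}" for t
    using annulus[OF that] \<open>0 < a\<close> by (auto simp: zero_prod_def)
  define R where "R = integral {0..T} (\<lambda>t. angular_defect c k (y t))"
  have cont: "continuous_on {0..T} (\<lambda>t. angular_defect c k (y t))"
    using sol nz by (intro continuous_at_imp_continuous_on ballI isCont_angular_defect has_vector_derivative_continuous)
  have "0 < R"
    unfolding R_def using \<open>0 < T\<close> \<open>y 0 = (0, a)\<close> \<open>0 < a\<close>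
    by (intro integral_pos_if_continuous_nonneg[OF cont, of 0])
      (auto simp: angular_defect_bounds angular_defect_def intro!: divide_pos_pos add_nonneg_pos)
  have "angular_defect c k (y t) \<le> 4 * a^2" if "t \<in> {0..T}" for t
    using angular_defect_bounds(2)[of c k "y t"] annulus[OF that] zero_le_power2[of "fst (y t)"] by linarith
  then have "R \<le> integral {0..T} (\<lambda>t. 4 * a^2)"
    unfolding R_def by (intro integral_le integrable_continuous_interval cont continuous_on_const) auto
  then have "R \<le> 4 * a^2 * T" using \<open>0 < T\<close> by (simp add: mult_ac)
  moreover obtain n :: int where "(k - c) * (k - 2 * c) * R - T = 2 * pi * of_int n"
    using reduced_field_winding[OF sol _ \<open>y T = y 0\<close> den nz] \<open>0 < T\<close> by (auto simp: R_def)
  ultimately show ?thesis using \<open>0 < R\<close> by blast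
qed

lemma not_isochronous_center_reduced_field:
  assumes kappa: "(k - c) * (k - 2 * c) \<noteq> 0"
  shows "\<not> isochronous_center (reduced_field c k)"
proof
  define \<kappa> K where "\<kappa> = (k - c) * (k - 2 * c)" and "K = \<bar>3 * k - 2 * c\<bar> + \<bar>c\<bar> + 1"
  assume "isochronous_center (reduced_field c k)"
  then obtain \<epsilon> T where "0 < \<epsilon>" "0 < T"
    and orbits: "\<forall>x \<in> ball 0 \<epsilon> - {0}. \<exists>\<phi>. \<phi> 0 = x \<and> minimal_period_sol (reduced_field c k) \<phi> T"
    unfolding isochronous_center_def by blast
  obtain \<delta> where "0 < \<delta>"
    and gap: "\<And>n::int. of_int n * (2 * pi) + T \<noteq> 0 \<Longrightarrow> \<delta> \<le> \<bar>of_int n * (2 * pi) + T\<bar>"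
    using int_multiples_gap[of "2 * pi" T] by auto
  obtain \<rho> where "0 < \<rho>" and \<rho>: "\<And>v. norm v < \<rho> \<Longrightarrow> 0 < lin_den c k v"
    using lin_coords_near_origin by blast
  have "((\<lambda>a. a) \<longlongrightarrow> 0) (at_right (0::real))" "((\<lambda>a. 2 * a) \<longlongrightarrow> 0) (at_right (0::real))"
    "((\<lambda>a. a * (64 * K * T)) \<longlongrightarrow> 0) (at_right (0::real))"
    "((\<lambda>a. \<bar>\<kappa>\<bar> * (4 * a^2 * T)) \<longlongrightarrow> 0) (at_right (0::real))"
    by (auto intro!: tendsto_eq_intros)
  from order_tendstoD(2)[OF this(1) \<open>0 < \<epsilon>\<close>] order_tendstoD(2)[OF this(2) \<open>0 < \<rho>\<close>]
    order_tendstoD(2)[OF this(3), of 3, simplified] order_tendstoD(2)[OF this(4) \<open>0 < \<delta>\<close>]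
  have "\<forall>\<^sub>F a in at_right 0.
      0 < a \<and> a < \<epsilon> \<and> 2 * a < \<rho> \<and> a * (64 * K * T) < 3 \<and> \<bar>\<kappa>\<bar> * (4 * a^2 * T) < \<delta>"
    by (simp add: eventually_conj_iff eventually_at_right_less)
  then obtain a where a: "0 < a" "a < \<epsilon>" "2 * a < \<rho>" "a * (64 * K * T) < 3"
    and small: "\<bar>\<kappa>\<bar> * (4 * a^2 * T) < \<delta>"
    using eventually_happens[of _ "at_right (0::real)"] by auto
  then have "(0, a) \<in> ball 0 \<epsilon> - {0}" by (simp add: zero_prod_def dist_Pair_Pair)
  then obtain y where "y 0 = (0, a)" and "minimal_period_sol (reduced_field c k) y T"
    using orbits by blast
  then have sol: "\<And>t. (y has_vector_derivative reduced_field c k (y t)) (at t)" and "y (0 + T) = y 0"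
    unfolding minimal_period_sol_def periodic_sol_def ode_sol_def by blast+
  then obtain R n where R: "0 < R" "R \<le> 4 * a^2 * T" and n: "\<kappa> * R - T = 2 * pi * of_int n"
    using small_periodic_solution_winding[OF sol _ \<open>y 0 = (0, a)\<close> a(1) \<open>0 < T\<close> \<rho> a(3)] a(4)
    by (auto simp: \<kappa>_def K_def)
  have "of_int n * (2 * pi) + T = \<kappa> * R" using n by (simp add: algebra_simps)
  then have "\<delta> \<le> \<bar>\<kappa> * R\<bar>"
    using gap[of n] kappa \<open>0 < R\<close> by (simp add: \<kappa>_def)
  also have "\<dots> \<le> \<bar>\<kappa>\<bar> * (4 * a^2 * T)"
    using R by (simp add: abs_mult mult_left_mono)
  finally show False using small by simp
qed

lemma isochronous_center_reduced_field_iff: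
  "isochronous_center (reduced_field c k) \<longleftrightarrow> (k - c) * (k - 2 * c) = 0"
  using isochronous_center_reduced_field not_isochronous_center_reduced_field by blast

lemma isochronous_center_ep_field_iff:
  "isochronous_center (ep_field d \<gamma>) \<longleftrightarrow> (2 * (1 - \<gamma>) + real d)^2 = 9 * real d * (1 - \<gamma>)"
  unfolding ep_field_eq_reduced_field isochronous_center_reduced_field_iff
  by (rule isochronicity_condition_kappa[symmetric])

lemma isochronicity_condition_iff:
  "(2 * (1 - \<gamma>) + real d)^2 = 9 * real d * (1 - \<gamma>) \<longleftrightarrow> \<gamma> = 1 - real d \<or> \<gamma> = 1 - real d / 4"
  unfolding isochronicity_condition_factored mult_eq_0_iff by (auto simp: field_simps)

theorem mainTheorem4:
  fixes d :: nat and \<gamma> :: real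
  shows "(\<forall>I \<phi>. open I \<longrightarrow> ode_sol_on (ep_field d \<gamma>) I \<phi> \<longrightarrow>
            lienard_sol (2 * (1 - \<gamma>) + real d) (real d * (1 - \<gamma>)) I (\<lambda>t. snd (\<phi> t)))
       \<and> (isochronous_center (ep_field d \<gamma>) \<longleftrightarrow> (2 * (1 - \<gamma>) + real d)^2 = 9 * real d * (1 - \<gamma>))
       \<and> ((2 * (1 - \<gamma>) + real d)^2 = 9 * real d * (1 - \<gamma>) \<longleftrightarrow> \<gamma> = 1 - real d \<or> \<gamma> = 1 - real d / 4)
       \<and> (isochronous_center (ep_field d 0) \<longleftrightarrow> d = 1 \<or> d = 4)"
proof (intro conjI allI impI isochronous_center_ep_field_iff isochronicity_condition_iff)
  fix I \<phi> assume "ode_sol_on (ep_field d \<gamma>) I \<phi>"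
  have "3 * ((2 * (1 - \<gamma>) + real d) / 3) = 2 * (1 - \<gamma>) + real d"
    and "(2 * (1 - \<gamma>) + real d - 2 * (1 - \<gamma>)) * (1 - \<gamma>) = real d * (1 - \<gamma>)" by simp_all
  with reduced_field_lienard[OF \<open>ode_sol_on _ I \<phi>\<close>[unfolded ep_field_eq_reduced_field]]
  show "lienard_sol (2 * (1 - \<gamma>) + real d) (real d * (1 - \<gamma>)) I (\<lambda>t. snd (\<phi> t))"
    by (simp only:)
next
  show "isochronous_center (ep_field d 0) \<longleftrightarrow> d = 1 \<or> d = 4"
    using isochronous_center_ep_field_iff[of d 0] isochronicity_condition_iff[of 0 d] by auto
qed

end
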